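(* For real parameters $\alpha,\beta\ge0$ define $\phi^{(\alpha,\beta)}=(\phi^{(\alpha,\beta)}_1,\phi^{(\alpha,\beta)}_2):\Omega_+^2\to\Omega_+^2$ by $$\phi^{(\alpha,\beta)}(x,y)=\left(y(I+\alpha xy)^{-1}(I+\beta xy),\; x(I+\beta yx)^{-1}(I+\alpha yx)\right).$$ For $x,y,z\in\Omega_+$ set $$F_{12}^{(\alpha,\beta)}(x,y,z)=\left(\phi_1^{(\alpha,\beta)}(x,y),\phi_2^{(\alpha,\beta)}(x,y),z\right),\quad F_{13}^{(\alpha,\gamma)}(x,y,z)=\left(\phi_1^{(\alpha,\gamma)}(x,z),y,\phi_2^{(\alpha,\gamma)}(x,z)\right),$$ $$F_{23}^{(\beta,\gamma)}(x,y,z)=\left(x,\phi_1^{(\beta,\gamma)}(y,z),\phi_2^{(\beta,\gamma)}(y,z)\right).$$ Then $\phi$ is a parametric Yang–Baxter map: for all $\alpha,\beta,\gamma\ge0$, $$F_{12}^{(\alpha,\beta)}\circ F_{13}^{(\alpha,\gamma)}\circ F_{23}^{(\beta,\gamma)}=F_{23}^{(\beta,\gamma)}\circ F_{13}^{(\alpha,\gamma)}\circ F_{12}^{(\alpha,\beta)}\quad\text{on }\Omega_+^3.$$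
   Context: Fix an integer $r\ge1$. $\Omega_+$ denotes the set of real symmetric positive definite $r\times r$ matrices and $I$ the identity matrix. For $\alpha,\beta\ge0$ the matrices $I+\alpha xy$ etc. are invertible for $x,y\in\Omega_+$, and $\phi^{(\alpha,\beta)}$ maps $\Omega_+^2$ into $\Omega_+^2$. *)

theory Defs
  imports "HOL-Analysis.Analysis"
begin

definition pos_def_mat :: "real^'n^'n \<Rightarrow> bool" where
  "pos_def_mat A \<longleftrightarrow> transpose A = A \<and> (\<forall>v. v \<noteq> 0 \<longrightarrow> v \<bullet> (A *v v) > 0)"

definition phi1 :: "real \<Rightarrow> real \<Rightarrow> real^'n^'n \<Rightarrow> real^'n^'n \<Rightarrow> real^'n^'n" where
  "phi1 a b x y = y ** matrix_inv (mat 1 + a *\<^sub>R (x ** y)) ** (mat 1 + b *\<^sub>R (x ** y))"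

definition phi2 :: "real \<Rightarrow> real \<Rightarrow> real^'n^'n \<Rightarrow> real^'n^'n \<Rightarrow> real^'n^'n" where
  "phi2 a b x y = x ** matrix_inv (mat 1 + b *\<^sub>R (y ** x)) ** (mat 1 + a *\<^sub>R (y ** x))"


definition F12 :: "real \<Rightarrow> real \<Rightarrow> (real^'n^'n) \<times> (real^'n^'n) \<times> (real^'n^'n) \<Rightarrow> (real^'n^'n) \<times> (real^'n^'n) \<times> (real^'n^'n)" where
  "F12 a b = (\<lambda>(x, y, z). (phi1 a b x y, phi2 a b x y, z))"

definition F13 :: "real \<Rightarrow> real \<Rightarrow> (real^'n^'n) \<times> (real^'n^'n) \<times> (real^'n^'n) \<Rightarrow> (real^'n^'n) \<times> (real^'n^'n) \<times> (real^'n^'n)" where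
  "F13 a c = (\<lambda>(x, y, z). (phi1 a c x z, y, phi2 a c x z))"

definition F23 :: "real \<Rightarrow> real \<Rightarrow> (real^'n^'n) \<times> (real^'n^'n) \<times> (real^'n^'n) \<Rightarrow> (real^'n^'n) \<times> (real^'n^'n) \<times> (real^'n^'n)" where
  "F23 b c = (\<lambda>(x, y, z). (x, phi1 b c y z, phi2 b c y z))"

end

theory Submission
  imports Defs
begin

text \<open>
  Write \<open>(u, v) = \<phi>\<^bsup>a,b\<^esup>(x, y)\<close>. Since \<open>y (I + a x y)\<inverse> = (a x + y\<inverse>)\<inverse>\<close>, one has
  \<open>u = (a x + y\<inverse>)\<inverse> (I + b x y)\<close>; positive definiteness, which \<open>\<phi>\<close> preserves, is only
  needed to guarantee that all inverses exist. The pair \<open>(u, v)\<close> shares four invariants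
  with \<open>(x, y)\<close>: \<open>v u = x y\<close>, \<open>u v = y x\<close>, \<open>u\<inverse> + b v = y\<inverse> + a x\<close> and
  \<open>v\<inverse> + a u = x\<inverse> + b y\<close>. The matrix \<open>\<phi>\<^sub>1\<^bsup>a,c\<^esup>(\<phi>\<^sub>1\<^bsup>a,b\<^esup>(x, y), z)\<close> is an explicit
  expression in \<open>x\<close> and in invariants of the pair \<open>(y, z)\<close> alone, so it does not change
  when \<open>(y, z)\<close> is first replaced by \<open>\<phi>\<^bsup>b,c\<^esup>(y, z)\<close>: this is the first component of the
  Yang--Baxter identity, and the third one is the same identity with \<open>x\<close> and \<open>z\<close>
  exchanged. For the middle component, both sides \<open>(u, v, w)\<close> satisfy \<open>w v u = x y z\<close>,
  and their outer components agree and are invertible.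
\<close>

lemma matrix_add_rdistrib: "((A::'a::semiring_1^'n^'m) + B) ** C = A ** C + B ** C"
  by (vector matrix_matrix_mult_def sum.distrib[symmetric] field_simps)

lemma matrix_scaleR_left: "(k *\<^sub>R (A::'a::real_algebra_1^'n^'m)) ** B = k *\<^sub>R (A ** B)"
  by (simp add: scalar_matrix_assoc)

lemma matrix_scaleR_right: "(A::'a::real_algebra_1^'n^'m) ** (k *\<^sub>R B) = k *\<^sub>R (A ** B)"
  by (simp add: matrix_scalar_ac scalar_matrix_assoc)

lemma matrix_inv_right: "invertible (A::'a::semiring_1^'n^'m) \<Longrightarrow> A ** matrix_inv A = mat 1"
  unfolding invertible_def matrix_inv_def
  using someI_ex[of "\<lambda>A'. A ** A' = mat 1 \<and> A' ** A = mat 1"] by blast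

lemma matrix_inv_left: "invertible (A::'a::semiring_1^'n^'m) \<Longrightarrow> matrix_inv A ** A = mat 1"
  unfolding invertible_def matrix_inv_def
  using someI_ex[of "\<lambda>A'. A ** A' = mat 1 \<and> A' ** A = mat 1"] by blast

lemma matrix_mul_inv_cancel_right: "invertible A \<Longrightarrow> X ** A ** matrix_inv A = X"
  by (metis matrix_inv_right matrix_mul_assoc matrix_mul_rid)

lemma matrix_mul_inv_cancel_left: "invertible A \<Longrightarrow> X ** matrix_inv A ** A = X"
  by (metis matrix_inv_left matrix_mul_assoc matrix_mul_rid)

lemma matrix_inv_unique:
  fixes A B :: "'a::field^'n^'n"
  assumes "A ** B = mat 1"
  shows "matrix_inv A = B"
proof -
  have "invertible A"
    using assms invertible_right_inverse by blast
  then have "matrix_inv A = matrix_inv A ** (A ** B)"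
    by (simp add: assms)
  also have "\<dots> = B"
    by (simp add: matrix_mul_assoc matrix_inv_left \<open>invertible A\<close>)
  finally show ?thesis .
qed

lemma matrix_inv_mult:
  fixes A B :: "'a::field^'n^'n"
  assumes "invertible A" "invertible B"
  shows "matrix_inv (A ** B) = matrix_inv B ** matrix_inv A"
  by (rule matrix_inv_unique)
    (metis assms matrix_inv_right matrix_mul_inv_cancel_right matrix_mul_assoc)

lemma transpose_matrix_inv:
  fixes A :: "'a::field^'n^'n"
  assumes "invertible A"
  shows "transpose (matrix_inv A) = matrix_inv (transpose A)"
  by (metis assms matrix_inv_left matrix_inv_unique matrix_transpose_mul transpose_mat)

lemma matrix_mul_cancel_outer:
  fixes A :: "'a::semiring_1^'n^'n" and C :: "'a^'m^'m"
  assumes "invertible A" "invertible C" "C ** B ** A = C ** B' ** A"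
  shows "B = B'"
proof -
  have "B = matrix_inv C ** (C ** B ** A) ** matrix_inv A"
    by (simp add: assms(1,2) matrix_mul_assoc matrix_inv_left matrix_mul_inv_cancel_right)
  also have "\<dots> = B'"
    by (simp add: assms matrix_mul_assoc matrix_inv_left matrix_mul_inv_cancel_right)
  finally show ?thesis .
qed

lemma transpose_add: "transpose ((A::'a::semiring_1^'n^'m) + B) = transpose A + transpose B"
  by (vector transpose_def)

definition pos_semidef_mat :: "real^'n^'n \<Rightarrow> bool" where
  "pos_semidef_mat A \<longleftrightarrow> transpose A = A \<and> (\<forall>v. v \<bullet> (A *v v) \<ge> 0)"

lemma pos_def_mat_symmetric: "pos_def_mat A \<Longrightarrow> transpose A = A"
  by (simp add: pos_def_mat_def)

lemma pos_def_imp_pos_semidef_mat: "pos_def_mat A \<Longrightarrow> pos_semidef_mat A"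
  unfolding pos_def_mat_def pos_semidef_mat_def by (metis inner_zero_left less_eq_real_def)

lemma pos_def_mat_invertible: "pos_def_mat A \<Longrightarrow> invertible A"
  unfolding invertible_left_inverse matrix_left_invertible_ker pos_def_mat_def
  by (metis inner_zero_right less_irrefl)

lemma pos_def_mat_matrix_inv:
  fixes A :: "real^'n^'n"
  assumes "pos_def_mat A"
  shows "pos_def_mat (matrix_inv A)"
  unfolding pos_def_mat_def
proof (intro conjI allI impI)
  have "invertible A"
    using assms by (rule pos_def_mat_invertible)
  then show "transpose (matrix_inv A) = matrix_inv A"
    by (simp add: transpose_matrix_inv pos_def_mat_symmetric assms)
  fix v :: "real^'n"
  assume "v \<noteq> 0"
  define w where "w = matrix_inv A *v v"
  have "v = A *v w"
    by (simp add: w_def matrix_vector_mul_assoc matrix_inv_right \<open>invertible A\<close>)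
  then have "w \<noteq> 0" and "v \<bullet> (matrix_inv A *v v) = w \<bullet> (A *v w)"
    using \<open>v \<noteq> 0\<close> by (auto simp: w_def inner_commute)
  then show "v \<bullet> (matrix_inv A *v v) > 0"
    using assms by (simp add: pos_def_mat_def)
qed

lemma pos_def_mat_add_pos_semidef:
  "pos_def_mat A \<Longrightarrow> pos_semidef_mat B \<Longrightarrow> pos_def_mat (A + B)"
  unfolding pos_def_mat_def pos_semidef_mat_def
  by (simp add: transpose_add matrix_vector_mult_add_rdistrib inner_add_right add_pos_nonneg)

lemma pos_semidef_mat_scaleR: "pos_semidef_mat A \<Longrightarrow> c \<ge> 0 \<Longrightarrow> pos_semidef_mat (c *\<^sub>R A)"
  unfolding pos_semidef_mat_def
  by (simp add: transpose_scalar scaleR_matrix_vector_assoc[symmetric])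

lemma pos_def_mat_scaleR: "pos_def_mat A \<Longrightarrow> c > 0 \<Longrightarrow> pos_def_mat (c *\<^sub>R A)"
  unfolding pos_def_mat_def
  by (simp add: transpose_scalar scaleR_matrix_vector_assoc[symmetric])

lemma pos_def_mat_scaleR_add:
  "pos_def_mat A \<Longrightarrow> pos_def_mat B \<Longrightarrow> a \<ge> 0 \<Longrightarrow> pos_def_mat (a *\<^sub>R A + B)"
  by (metis add.commute pos_def_mat_add_pos_semidef pos_def_imp_pos_semidef_mat
      pos_semidef_mat_scaleR)

lemma pos_semidef_mat_congruence:
  fixes C :: "real^'n^'m"
  assumes "pos_semidef_mat D"
  shows "pos_semidef_mat (transpose C ** D ** C)"
  unfolding pos_semidef_mat_def
proof (intro conjI allI)
  show "transpose (transpose C ** D ** C) = transpose C ** D ** C"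
    using assms by (simp add: pos_semidef_mat_def matrix_transpose_mul matrix_mul_assoc)
  fix v :: "real^'n"
  have "v \<bullet> ((transpose C ** D ** C) *v v) = (C *v v) \<bullet> (D *v (C *v v))"
    by (metis dot_lmul_matrix matrix_vector_mul_assoc vector_transpose_matrix)
  also have "\<dots> \<ge> 0"
    using assms by (simp add: pos_semidef_mat_def)
  finally show "v \<bullet> ((transpose C ** D ** C) *v v) \<ge> 0" .
qed

lemma phi2_eq_phi1: "phi2 a b x y = phi1 b a y x"
  by (simp add: phi1_def phi2_def)

lemma scaleR_add_matrix_inv_mult:
  fixes x y :: "real^'n^'n"
  assumes "invertible y"
  shows "(a *\<^sub>R x + matrix_inv y) ** y = mat 1 + a *\<^sub>R (x ** y)"
  using assms
  by (simp add: matrix_add_rdistrib matrix_scaleR_left matrix_inv_left add.commute)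

lemma invertible_scaleR_add_matrix_inv:
  "pos_def_mat x \<Longrightarrow> pos_def_mat y \<Longrightarrow> a \<ge> 0 \<Longrightarrow> invertible (a *\<^sub>R x + matrix_inv y)"
  by (simp add: pos_def_mat_invertible pos_def_mat_scaleR_add pos_def_mat_matrix_inv)

lemma phi1_eq:
  assumes "pos_def_mat x" "pos_def_mat y" "a \<ge> 0"
  shows "phi1 a b x y = matrix_inv (a *\<^sub>R x + matrix_inv y) ** (mat 1 + b *\<^sub>R (x ** y))"
proof -
  let ?Q = "a *\<^sub>R x + matrix_inv y"
  have "invertible y" "invertible ?Q"
    using assms by (simp_all add: pos_def_mat_invertible invertible_scaleR_add_matrix_inv)
  then have "y ** matrix_inv (mat 1 + a *\<^sub>R (x ** y)) = matrix_inv ?Q"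
    by (simp flip: scaleR_add_matrix_inv_mult
        add: matrix_inv_mult matrix_mul_assoc matrix_inv_right)
  then show ?thesis
    by (simp add: phi1_def)
qed

lemma phi1_eqI:
  assumes "pos_def_mat x" "pos_def_mat y" "a \<ge> 0"
    and "(a *\<^sub>R x + matrix_inv y) ** w = mat 1 + b *\<^sub>R (x ** y)"
  shows "phi1 a b x y = w"
proof -
  let ?Q = "a *\<^sub>R x + matrix_inv y"
  have "invertible ?Q"
    using assms by (simp add: invertible_scaleR_add_matrix_inv)
  have "phi1 a b x y = matrix_inv ?Q ** (?Q ** w)"
    using assms by (simp add: phi1_eq)
  also have "\<dots> = w"
    by (simp add: matrix_mul_assoc matrix_inv_left \<open>invertible ?Q\<close>)
  finally show ?thesis .
qed

lemma phi1_eq_add_congruence: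
  assumes "pos_def_mat x" "pos_def_mat y" "a \<ge> 0"
  shows "phi1 a b x y = y + (b - a) *\<^sub>R (y ** matrix_inv (a *\<^sub>R y + matrix_inv x) ** y)"
proof (rule phi1_eqI[OF assms])
  let ?D = "a *\<^sub>R y + matrix_inv x"
  have "invertible x" "invertible y" "invertible ?D"
    using assms by (simp_all add: pos_def_mat_invertible invertible_scaleR_add_matrix_inv)
  have "(a *\<^sub>R x + matrix_inv y) ** y = x ** ?D"
    by (subst scaleR_add_matrix_inv_mult[OF \<open>invertible y\<close>])
      (simp add: matrix_add_ldistrib matrix_scaleR_right matrix_inv_right \<open>invertible x\<close> add.commute)
  then have "(a *\<^sub>R x + matrix_inv y) ** (y ** matrix_inv ?D ** y) = x ** y"
    by (metis matrix_mul_assoc matrix_mul_inv_cancel_right \<open>invertible ?D\<close>)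
  then have "(a *\<^sub>R x + matrix_inv y) ** (y + (b - a) *\<^sub>R (y ** matrix_inv ?D ** y))
      = (mat 1 + a *\<^sub>R (x ** y)) + (b - a) *\<^sub>R (x ** y)"
    by (simp add: matrix_add_ldistrib matrix_scaleR_right scaleR_add_matrix_inv_mult
        \<open>invertible y\<close>)
  also have "\<dots> = mat 1 + b *\<^sub>R (x ** y)"
    by (simp add: algebra_simps)
  finally show "(a *\<^sub>R x + matrix_inv y) ** (y + (b - a) *\<^sub>R (y ** matrix_inv ?D ** y))
      = mat 1 + b *\<^sub>R (x ** y)" .
qed

lemma phi1_eq_convex_combination:
  assumes "pos_def_mat x" "pos_def_mat y" "a > 0"
  shows "phi1 a b x y = (b / a) *\<^sub>R y + (1 - b / a) *\<^sub>R matrix_inv (a *\<^sub>R x + matrix_inv y)"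
proof (rule phi1_eqI)
  let ?Q = "a *\<^sub>R x + matrix_inv y"
  have "invertible y" "invertible ?Q"
    using assms by (simp_all add: pos_def_mat_invertible invertible_scaleR_add_matrix_inv)
  then have "?Q ** ((b / a) *\<^sub>R y + (1 - b / a) *\<^sub>R matrix_inv ?Q)
      = (b / a) *\<^sub>R (mat 1 + a *\<^sub>R (x ** y)) + (1 - b / a) *\<^sub>R mat 1"
    by (simp add: matrix_add_ldistrib matrix_scaleR_right scaleR_add_matrix_inv_mult matrix_inv_right)
  also have "\<dots> = mat 1 + b *\<^sub>R (x ** y)"
    using \<open>a > 0\<close> by (simp add: algebra_simps)
  finally show "?Q ** ((b / a) *\<^sub>R y + (1 - b / a) *\<^sub>R matrix_inv ?Q) = mat 1 + b *\<^sub>R (x ** y)" .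
qed (use assms in auto)

lemma phi1_pos_def:
  assumes "pos_def_mat x" "pos_def_mat y" "a \<ge> 0" "b \<ge> 0"
  shows "pos_def_mat (phi1 a b x y)"
proof (cases "a \<le> b")
  case True
  let ?D = "a *\<^sub>R y + matrix_inv x"
  have "pos_def_mat ?D"
    using assms by (simp add: pos_def_mat_scaleR_add pos_def_mat_matrix_inv)
  then have "pos_semidef_mat (transpose y ** matrix_inv ?D ** y)"
    by (simp add: pos_semidef_mat_congruence pos_def_imp_pos_semidef_mat pos_def_mat_matrix_inv)
  then show ?thesis
    using assms True
    by (simp add: phi1_eq_add_congruence pos_def_mat_symmetric pos_def_mat_add_pos_semidef
        pos_semidef_mat_scaleR)
next
  case False
  then have "a > 0" "b / a < 1"
    using \<open>b \<ge> 0\<close> by auto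
  have "pos_def_mat (matrix_inv (a *\<^sub>R x + matrix_inv y))"
    using assms by (simp add: pos_def_mat_scaleR_add pos_def_mat_matrix_inv)
  then show ?thesis
    using assms \<open>a > 0\<close> \<open>b / a < 1\<close>
    by (simp add: phi1_eq_convex_combination add.commute[of "(b / a) *\<^sub>R y"]
        pos_def_mat_add_pos_semidef pos_def_mat_scaleR pos_semidef_mat_scaleR
        pos_def_imp_pos_semidef_mat)
qed

lemma phi2_pos_def:
  "pos_def_mat x \<Longrightarrow> pos_def_mat y \<Longrightarrow> a \<ge> 0 \<Longrightarrow> b \<ge> 0 \<Longrightarrow> pos_def_mat (phi2 a b x y)"
  by (simp add: phi2_eq_phi1 phi1_pos_def)

lemma phi2_mult_phi1:
  assumes "pos_def_mat x" "pos_def_mat y" "a \<ge> 0" "b \<ge> 0"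
  shows "phi2 a b x y ** phi1 a b x y = x ** y"
proof -
  let ?Q = "a *\<^sub>R x + matrix_inv y" and ?R = "b *\<^sub>R y + matrix_inv x"
  have "invertible x" "invertible y" "invertible ?Q" "invertible ?R"
    using assms by (simp_all add: pos_def_mat_invertible invertible_scaleR_add_matrix_inv)
  have "phi2 a b x y ** phi1 a b x y
      = matrix_inv ?R ** (mat 1 + a *\<^sub>R (y ** x)) ** matrix_inv ?Q ** (mat 1 + b *\<^sub>R (x ** y))"
    using assms by (simp add: phi2_eq_phi1 phi1_eq matrix_mul_assoc)
  also have "mat 1 + a *\<^sub>R (y ** x) = y ** ?Q"
    by (simp add: matrix_add_ldistrib matrix_scaleR_right matrix_inv_right \<open>invertible y\<close> add.commute)
  also have "matrix_inv ?R ** (y ** ?Q) ** matrix_inv ?Q = matrix_inv ?R ** y"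
    by (simp add: matrix_mul_assoc matrix_mul_inv_cancel_right \<open>invertible ?Q\<close>)
  also have "\<dots> ** (mat 1 + b *\<^sub>R (x ** y)) = matrix_inv ?R ** (y ** (mat 1 + b *\<^sub>R (x ** y)))"
    by (simp add: matrix_mul_assoc)
  also have "y ** (mat 1 + b *\<^sub>R (x ** y)) = ?R ** (x ** y)"
    by (simp add: matrix_add_ldistrib matrix_add_rdistrib matrix_scaleR_left matrix_scaleR_right
        matrix_inv_left \<open>invertible x\<close> matrix_mul_assoc add.commute)
  also have "matrix_inv ?R ** (?R ** (x ** y)) = x ** y"
    by (simp add: matrix_mul_assoc matrix_inv_left \<open>invertible ?R\<close>)
  finally show ?thesis .
qed

lemma phi1_mult_phi2:
  "pos_def_mat x \<Longrightarrow> pos_def_mat y \<Longrightarrow> a \<ge> 0 \<Longrightarrow> b \<ge> 0 \<Longrightarrow>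
    phi1 a b x y ** phi2 a b x y = y ** x"
  using phi2_mult_phi1[of y x b a] by (simp add: phi2_eq_phi1)

lemma inv_phi1_add_phi2:
  assumes "pos_def_mat x" "pos_def_mat y" "a \<ge> 0" "b \<ge> 0"
  shows "matrix_inv (phi1 a b x y) + b *\<^sub>R phi2 a b x y = matrix_inv y + a *\<^sub>R x"
proof -
  let ?Q = "a *\<^sub>R x + matrix_inv y" and ?u = "phi1 a b x y"
  have "invertible x" "invertible y" "invertible ?Q" "invertible ?u"
    using assms by (simp_all add: pos_def_mat_invertible invertible_scaleR_add_matrix_inv
        phi1_pos_def)
  have commute: "(mat 1 + b *\<^sub>R (x ** y)) ** ?Q = ?Q ** (mat 1 + b *\<^sub>R (y ** x))"
    by (simp add: matrix_add_ldistrib matrix_add_rdistrib matrix_scaleR_left matrix_scaleR_right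
        matrix_inv_left matrix_inv_right \<open>invertible x\<close> \<open>invertible y\<close> matrix_mul_assoc
        algebra_simps matrix_mul_inv_cancel_right)
  have "?u ** ?Q = matrix_inv ?Q ** ((mat 1 + b *\<^sub>R (x ** y)) ** ?Q)"
    using assms by (simp add: phi1_eq matrix_mul_assoc)
  also have "\<dots> = mat 1 + b *\<^sub>R (y ** x)"
    by (simp add: commute matrix_mul_assoc matrix_inv_left \<open>invertible ?Q\<close>)
  finally have uQ: "?u ** ?Q = mat 1 + b *\<^sub>R (y ** x)" .
  have "matrix_inv ?u + b *\<^sub>R phi2 a b x y = matrix_inv ?u ** (mat 1 + b *\<^sub>R (?u ** phi2 a b x y))"
    by (simp add: matrix_add_ldistrib matrix_scaleR_right matrix_mul_assoc matrix_inv_left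
        \<open>invertible ?u\<close>)
  also have "\<dots> = matrix_inv ?u ** (?u ** ?Q)"
    using assms by (simp add: phi1_mult_phi2 uQ)
  also have "\<dots> = ?Q"
    by (simp add: matrix_mul_assoc matrix_inv_left \<open>invertible ?u\<close>)
  finally show ?thesis
    by (simp add: add.commute)
qed

lemma inv_phi2_add_phi1:
  "pos_def_mat x \<Longrightarrow> pos_def_mat y \<Longrightarrow> a \<ge> 0 \<Longrightarrow> b \<ge> 0 \<Longrightarrow>
    matrix_inv (phi2 a b x y) + a *\<^sub>R phi1 a b x y = matrix_inv x + b *\<^sub>R y"
  using inv_phi1_add_phi2[of y x b a] by (simp add: phi2_eq_phi1)

lemma phi1_phi1_eq:
  assumes "pos_def_mat x" "pos_def_mat y" "pos_def_mat z" "a \<ge> 0" "b \<ge> 0" "c \<ge> 0"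
  shows "phi1 a c (phi1 a b x y) z =
    matrix_inv (a *\<^sub>R (x ** (matrix_inv z + b *\<^sub>R y)) + a *\<^sub>R mat 1 + matrix_inv (z ** y))
    ** (a *\<^sub>R x + (matrix_inv y + c *\<^sub>R z) + (b * c) *\<^sub>R (x ** (y ** z)))"
proof -
  let ?u = "phi1 a b x y"
  let ?Q = "a *\<^sub>R x + matrix_inv y" and ?Q' = "a *\<^sub>R ?u + matrix_inv z"
  have "pos_def_mat ?u"
    using assms by (simp add: phi1_pos_def)
  have "invertible y" "invertible z" "invertible ?Q" "invertible ?Q'"
    using assms \<open>pos_def_mat ?u\<close>
    by (simp_all add: pos_def_mat_invertible invertible_scaleR_add_matrix_inv)
  have Qu: "?Q ** ?u = mat 1 + b *\<^sub>R (x ** y)"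
    using assms by (simp add: phi1_eq matrix_mul_assoc matrix_inv_right \<open>invertible ?Q\<close>)
  have "?Q ** ?Q' = a *\<^sub>R (mat 1 + b *\<^sub>R (x ** y)) + ?Q ** matrix_inv z"
    by (simp add: matrix_add_ldistrib matrix_scaleR_right Qu)
  also have "\<dots> = a *\<^sub>R (x ** (matrix_inv z + b *\<^sub>R y)) + a *\<^sub>R mat 1 + matrix_inv (z ** y)"
    by (simp add: matrix_add_ldistrib matrix_add_rdistrib matrix_scaleR_left matrix_scaleR_right
        matrix_inv_mult \<open>invertible y\<close> \<open>invertible z\<close> algebra_simps)
  finally have QQ': "?Q ** ?Q' = \<dots>" .
  have "?Q ** (mat 1 + c *\<^sub>R (?u ** z)) = ?Q + c *\<^sub>R ((mat 1 + b *\<^sub>R (x ** y)) ** z)"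
    by (simp add: matrix_add_ldistrib matrix_scaleR_right matrix_mul_assoc flip: Qu)
  also have "\<dots> = a *\<^sub>R x + (matrix_inv y + c *\<^sub>R z) + (b * c) *\<^sub>R (x ** (y ** z))"
    by (simp add: matrix_add_rdistrib matrix_scaleR_left matrix_mul_assoc algebra_simps)
  finally have QP': "?Q ** (mat 1 + c *\<^sub>R (?u ** z)) = \<dots>" .
  have "phi1 a c ?u z = matrix_inv ?Q' ** (mat 1 + c *\<^sub>R (?u ** z))"
    using \<open>pos_def_mat ?u\<close> assms by (simp only: phi1_eq)
  also have "\<dots> = matrix_inv (?Q ** ?Q') ** (?Q ** (mat 1 + c *\<^sub>R (?u ** z)))"
    by (simp add: matrix_inv_mult \<open>invertible ?Q\<close> \<open>invertible ?Q'\<close> matrix_mul_assoc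
        matrix_mul_inv_cancel_left)
  finally show ?thesis
    by (simp only: QQ' QP')
qed

lemma phi1_yang_baxter:
  assumes "pos_def_mat x" "pos_def_mat y" "pos_def_mat z" "a \<ge> 0" "b \<ge> 0" "c \<ge> 0"
  shows "phi1 a b (phi1 a c x (phi2 b c y z)) (phi1 b c y z) = phi1 a c (phi1 a b x y) z"
proof -
  have "pos_def_mat (phi1 b c y z)" "pos_def_mat (phi2 b c y z)"
    using assms by (simp_all add: phi1_pos_def phi2_pos_def)
  then show ?thesis
    using assms
    by (simp add: phi1_phi1_eq phi1_mult_phi2 phi2_mult_phi1 inv_phi1_add_phi2 inv_phi2_add_phi1
        mult.commute)
qed

lemma phi2_yang_baxter:
  "pos_def_mat x \<Longrightarrow> pos_def_mat y \<Longrightarrow> pos_def_mat z \<Longrightarrow> a \<ge> 0 \<Longrightarrow> b \<ge> 0 \<Longrightarrow> c \<ge> 0 \<Longrightarrow>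
    phi2 a c x (phi2 b c y z) = phi2 b c (phi2 a b x y) (phi2 a c (phi1 a b x y) z)"
  using phi1_yang_baxter[of z y x c b a] by (simp add: phi2_eq_phi1)

lemma phi_middle_yang_baxter:
  assumes "pos_def_mat x" "pos_def_mat y" "pos_def_mat z" "a \<ge> 0" "b \<ge> 0" "c \<ge> 0"
  shows "phi2 a b (phi1 a c x (phi2 b c y z)) (phi1 b c y z)
    = phi1 b c (phi2 a b x y) (phi2 a c (phi1 a b x y) z)"
proof (rule matrix_mul_cancel_outer)
  define y1 z1 x2 where "y1 = phi1 b c y z" and "z1 = phi2 b c y z" and "x2 = phi1 a c x z1"
  define x1 y2 z2 where "x1 = phi1 a b x y" and "y2 = phi2 a b x y" and "z2 = phi2 a c x1 z"
  have pd: "pos_def_mat y1" "pos_def_mat z1" "pos_def_mat x2" "pos_def_mat x1" "pos_def_mat y2"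
    "pos_def_mat z2"
    using assms by (simp_all add: y1_def z1_def x2_def x1_def y2_def z2_def phi1_pos_def phi2_pos_def)
  have outer_eqs: "phi1 a b x2 y1 = phi1 a c x1 z" "phi2 a c x z1 = phi2 b c y2 z2"
    using assms by (simp_all add: y1_def z1_def x2_def x1_def y2_def z2_def
        phi1_yang_baxter phi2_yang_baxter)
  show "invertible (phi1 a b x2 y1)" "invertible (phi2 a c x z1)"
    using assms pd by (simp_all add: pos_def_mat_invertible phi1_pos_def phi2_pos_def)
  have "phi2 a c x z1 ** phi2 a b x2 y1 ** phi1 a b x2 y1 = phi2 a c x z1 ** x2 ** y1"
    using assms pd by (simp add: phi2_mult_phi1 flip: matrix_mul_assoc)
  also have "\<dots> = x ** (z1 ** y1)"
    using assms pd by (simp add: x2_def phi2_mult_phi1) (simp add: matrix_mul_assoc)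
  also have "\<dots> = y2 ** x1 ** z"
    using assms by (simp add: y1_def z1_def x1_def y2_def phi2_mult_phi1 matrix_mul_assoc)
  also have "\<dots> = phi2 b c y2 z2 ** phi1 b c y2 z2 ** phi1 a c x1 z"
    using assms pd by (simp add: phi2_mult_phi1) (simp add: z2_def phi2_mult_phi1 flip: matrix_mul_assoc)
  finally show "phi2 a c x z1 ** phi2 a b x2 y1 ** phi1 a b x2 y1
      = phi2 a c x z1 ** phi1 b c y2 z2 ** phi1 a b x2 y1"
    by (simp add: outer_eqs)
qed

theorem theorem3:
  fixes x y z :: "real^'n^'n" and \<alpha> \<beta> \<gamma> :: real
  assumes "\<alpha> \<ge> 0" "\<beta> \<ge> 0" "\<gamma> \<ge> 0"
    and "pos_def_mat x" "pos_def_mat y" "pos_def_mat z"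
  shows "(F12 \<alpha> \<beta> \<circ> F13 \<alpha> \<gamma> \<circ> F23 \<beta> \<gamma>) (x, y, z)
       = (F23 \<beta> \<gamma> \<circ> F13 \<alpha> \<gamma> \<circ> F12 \<alpha> \<beta>) (x, y, z)"
  using assms
  by (simp add: F12_def F13_def F23_def phi1_yang_baxter phi_middle_yang_baxter phi2_yang_baxter)

end
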